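(* Let $\mathbb{K}$ be any field and let $p_1,\ldots,p_m\in\mathbb{K}[x]$ be tame polynomials. Let $k_1,\ldots,k_m,k$ be the orders of the groups $\Gamma_\mathbb{K}(p_1),\ldots,\Gamma_\mathbb{K}(p_m),\Gamma_\mathbb{K}(p_1\circ\cdots\circ p_m)$. Then $k$ divides $k_1k_2\cdots k_m$.
   Context: A polynomial $f\in\mathbb{K}[x]$ is called tame if $\mathrm{char}\,\mathbb{K}$ does not divide $\deg f$ (in particular a tame polynomial is non-constant). Composition is $g\circ h=g(h(x))$. For a non-constant rational function $f\in\mathbb{K}(x)$, its fixing group is $\Gamma_\mathbb{K}(f)=\{u=\frac{ax+b}{cx+d}: a,b,c,d\in\mathbb{K},\ ad-bc\neq 0,\ f\circ u=f\}$, a group under composition; it is finite, its order dividing $\deg f$. *)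

theory Defs
  imports "HOL-Computational_Algebra.Polynomial" "HOL-Computational_Algebra.Fraction_Field"
begin

definition tame :: "'a::field poly \<Rightarrow> bool" where
  "tame p \<longleftrightarrow> \<not> CHAR('a) dvd degree p"

definition mobius :: "'a::field \<Rightarrow> 'a \<Rightarrow> 'a \<Rightarrow> 'a \<Rightarrow> 'a poly fract" where
  "mobius a b c d = Fract [:b, a:] [:d, c:]"

definition poly_comp_ratfun :: "'a::field poly \<Rightarrow> 'a poly fract \<Rightarrow> 'a poly fract" where
  "poly_comp_ratfun f u = poly (map_poly (\<lambda>c. Fract [:c:] 1) f) u"

definition fixing_group :: "'a::field poly \<Rightarrow> 'a poly fract set" where
  "fixing_group f = {u. \<exists>a b c d. a * d - b * c \<noteq> 0 \<and> u = mobius a b c d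
                          \<and> poly_comp_ratfun f u = Fract f 1}"

end

(*
  A Moebius transformation fixing a non-constant polynomial f has no pole: clearing
  denominators in f((ax+b)/(cx+d)) = f and evaluating at -d/c, only the top-degree term
  survives.  Hence Gamma(f) is the group of linear polynomials q with f o q = f.

  Let g be tame, h non-constant and u in Gamma(g o h).  Take the linear l for which l o h
  has the same leading coefficient and constant term as h o u.  Right factors of a tame
  left factor are unique up to these data: if G1 o A = G2 o C with deg A = deg C = n and
  equal leading coefficients, then gamma (A^r - C^r) has degree at most (r - 1) n, whereas
  A^r - C^r = (A - C) * sum C^(r-1-i) A^i and the sum has leading coefficient r lc(A)^(r-1),
  non-zero because r = deg G1 is non-zero in K.  So h o u = l o h, whence l is in Gamma(g).
  The map u |-> l is a homomorphism Gamma(g o h) -> Gamma(g) with kernel Gamma(h), so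
  |Gamma(g o h)| = |Gamma(h)| * |image| divides |Gamma(h)| * |Gamma(g)|.
*)

theory Submission
  imports Defs "HOL-Algebra.Coset"
begin

lemma pcompose_idL [simp]: "[:0, 1:] \<circ>\<^sub>p q = q"
  for q :: "'a::comm_semiring_1 poly"
  by (simp add: pcompose_pCons smult_1_left)

lemma pcompose_monom: "monom c n \<circ>\<^sub>p q = smult c (q ^ n)"
  for q :: "'a::comm_semiring_1 poly"
  by (induction n) (simp_all add: monom_0 monom_Suc pcompose_pCons pcompose_smult)

lemma pcompose_right_cancel:
  fixes p q h :: "'a::idom poly"
  assumes "degree h \<noteq> 0"
  shows "p \<circ>\<^sub>p h = q \<circ>\<^sub>p h \<longleftrightarrow> p = q"
  using pcompose_eq_0_iff[of h "p - q"] assms by (auto simp: pcompose_diff)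

lemma tame_iff_of_nat_degree: "tame p \<longleftrightarrow> of_nat (degree p) \<noteq> (0::'a)"
  for p :: "'a::field poly"
  by (simp add: tame_def of_nat_eq_0_iff_char_dvd)

lemma tame_degree_pos: "tame p \<Longrightarrow> degree p \<noteq> 0"
  by (metis dvd_0_right tame_def)

lemma tame_pcompose: "tame p \<Longrightarrow> tame q \<Longrightarrow> tame (p \<circ>\<^sub>p q)"
  by (simp add: tame_iff_of_nat_degree degree_pcompose)

lemma linear_poly_inverse:
  fixes q :: "'a::field poly"
  assumes "degree q = 1"
  obtains r where "degree r = 1" "q \<circ>\<^sub>p r = [:0, 1:]" "r \<circ>\<^sub>p q = [:0, 1:]"
proof -
  obtain a b where q: "q = [:b, a:]" "a \<noteq> 0"
    using degree1_coeffs[OF assms] .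
  show thesis
    by (rule that[of "[:- b / a, 1 / a:]"]) (use q in \<open>simp_all add: pcompose_pCons field_simps\<close>)
qed

lemma degree_pcompose_minus_lead_term:
  fixes G A :: "'a::idom poly"
  shows "degree (G \<circ>\<^sub>p A - smult (lead_coeff G) (A ^ degree G)) \<le> (degree G - 1) * degree A"
proof -
  define R where "R = G - monom (lead_coeff G) (degree G)"
  have "degree R \<le> degree G - 1"
    by (rule degree_le) (auto simp: R_def coeff_eq_0 coeff_monom)
  then have "degree (R \<circ>\<^sub>p A) \<le> (degree G - 1) * degree A"
    using degree_pcompose_le[of R A] by (meson mult_le_mono1 order_trans)
  moreover have "G \<circ>\<^sub>p A - smult (lead_coeff G) (A ^ degree G) = R \<circ>\<^sub>p A"
    by (simp add: R_def pcompose_diff pcompose_monom)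
  ultimately show ?thesis by simp
qed

lemma degree_power_diff_power:
  fixes A C :: "'a::idom poly"
  assumes "A \<noteq> C" "degree A = degree C" "lead_coeff A = lead_coeff C" "of_nat r \<noteq> (0::'a)"
  shows "degree (A ^ r - C ^ r) = degree (A - C) + (r - 1) * degree A"
proof -
  define n where "n = degree A"
  have "A \<noteq> 0" "C \<noteq> 0"
    using assms(1,3) by auto
  define S where "S = (\<Sum>i<r. C ^ (r - Suc i) * A ^ i)"
  have term_degree: "degree (C ^ (r - Suc i) * A ^ i) = (r - 1) * n"
    and term_lead: "lead_coeff (C ^ (r - Suc i) * A ^ i) = lead_coeff A ^ (r - 1)"
    if "i < r" for i
  proof -
    have "r - Suc i + i = r - 1"
      using that by arith
    then show "degree (C ^ (r - Suc i) * A ^ i) = (r - 1) * n"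
      using \<open>A \<noteq> 0\<close> \<open>C \<noteq> 0\<close> assms(2)
      by (simp add: n_def degree_mult_eq degree_power_eq flip: add_mult_distrib)
    show "lead_coeff (C ^ (r - Suc i) * A ^ i) = lead_coeff A ^ (r - 1)"
      using \<open>r - Suc i + i = r - 1\<close> assms(3)
      by (simp add: lead_coeff_mult lead_coeff_power flip: power_add)
  qed
  have "coeff S ((r - 1) * n) = of_nat r * lead_coeff A ^ (r - 1)"
    unfolding S_def coeff_sum using term_degree term_lead by simp
  then have "coeff S ((r - 1) * n) \<noteq> 0"
    using assms(4) \<open>A \<noteq> 0\<close> by simp
  moreover have "degree S \<le> (r - 1) * n"
    unfolding S_def by (rule degree_sum_le) (simp_all add: term_degree)
  ultimately have "degree S = (r - 1) * n" "S \<noteq> 0"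
    by (auto intro: antisym le_degree)
  moreover have "A ^ r - C ^ r = (A - C) * S"
    unfolding S_def by (rule power_diff_sumr2)
  ultimately show ?thesis
    using assms(1) by (simp add: n_def degree_mult_eq)
qed

lemma pcompose_right_factor_unique:
  fixes G1 G2 A C :: "'a::field poly"
  assumes eq: "G1 \<circ>\<^sub>p A = G2 \<circ>\<^sub>p C" and "tame G1"
    and deg: "degree A = degree C" "degree A \<noteq> 0"
    and lead: "lead_coeff A = lead_coeff C" and const: "coeff A 0 = coeff C 0"
  shows "A = C"
proof (rule ccontr)
  assume "A \<noteq> C"
  define r n where "r = degree G1" and "n = degree A"
  have "degree G2 = r"
    using arg_cong[OF eq, of degree] deg by (simp add: r_def degree_pcompose)
  moreover have "lead_coeff A \<noteq> 0"
    using deg(2) by auto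
  ultimately have "lead_coeff G2 = lead_coeff G1"
    using arg_cong[OF eq, of lead_coeff] deg lead by (simp add: r_def lead_coeff_comp)
  define \<gamma> where "\<gamma> = lead_coeff G1"
  have "\<gamma> \<noteq> 0"
    using tame_degree_pos[OF \<open>tame G1\<close>] by (auto simp: \<gamma>_def)
  have "smult \<gamma> (A ^ r - C ^ r)
      = (G2 \<circ>\<^sub>p C - smult (lead_coeff G2) (C ^ degree G2))
        - (G1 \<circ>\<^sub>p A - smult (lead_coeff G1) (A ^ degree G1))"
    using eq \<open>degree G2 = r\<close> \<open>lead_coeff G2 = lead_coeff G1\<close>
    by (simp add: \<gamma>_def r_def smult_diff_right)
  then have "degree (smult \<gamma> (A ^ r - C ^ r)) \<le> (r - 1) * n"
    using degree_pcompose_minus_lead_term[of G1 A] degree_pcompose_minus_lead_term[of G2 C]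
      \<open>degree G2 = r\<close> deg(1) by (metis degree_diff_le n_def r_def)
  moreover have "degree (smult \<gamma> (A ^ r - C ^ r)) = degree (A - C) + (r - 1) * n"
    using degree_power_diff_power[OF \<open>A \<noteq> C\<close> deg(1) lead] \<open>tame G1\<close> \<open>\<gamma> \<noteq> 0\<close>
    by (simp add: r_def n_def tame_iff_of_nat_degree)
  ultimately have "degree (A - C) = 0"
    by simp
  then have "A - C = 0"
    using const by (metis degree_0_id coeff_diff diff_self pCons_0_0)
  with \<open>A \<noteq> C\<close> show False
    by simp
qed

lemma linear_intertwiner_exists:
  fixes g h u :: "'a::field poly"
  assumes "tame g" "degree h \<noteq> 0" "degree u = 1"
    and fixed: "g \<circ>\<^sub>p (h \<circ>\<^sub>p u) = g \<circ>\<^sub>p h"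
  obtains l where "degree l = 1" "h \<circ>\<^sub>p u = l \<circ>\<^sub>p h"
proof -
  define \<alpha> where "\<alpha> = lead_coeff u ^ degree h"
  define l where "l = [:coeff (h \<circ>\<^sub>p u) 0 - \<alpha> * coeff h 0, \<alpha>:]"
  have "lead_coeff u \<noteq> 0"
    using \<open>degree u = 1\<close> by (metis degree_0 leading_coeff_0_iff zero_neq_one)
  then have "\<alpha> \<noteq> 0"
    by (simp add: \<alpha>_def)
  then have "degree l = 1"
    by (simp add: l_def)
  then obtain l' where l': "degree l' = 1" "l' \<circ>\<^sub>p l = [:0, 1:]"
    by (rule linear_poly_inverse)
  have "g \<circ>\<^sub>p (h \<circ>\<^sub>p u) = (g \<circ>\<^sub>p l') \<circ>\<^sub>p (l \<circ>\<^sub>p h)"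
    using fixed l'(2) by (metis pcompose_assoc pcompose_idL pcompose_idR)
  moreover have "h \<circ>\<^sub>p u = l \<circ>\<^sub>p h"
  proof (rule pcompose_right_factor_unique[OF calculation \<open>tame g\<close>])
    show "degree (h \<circ>\<^sub>p u) = degree (l \<circ>\<^sub>p h)" "degree (h \<circ>\<^sub>p u) \<noteq> 0"
      using \<open>degree u = 1\<close> \<open>degree l = 1\<close> \<open>degree h \<noteq> 0\<close> by (simp_all add: degree_pcompose)
    show "lead_coeff (h \<circ>\<^sub>p u) = lead_coeff (l \<circ>\<^sub>p h)"
      using \<open>degree u = 1\<close> \<open>degree h \<noteq> 0\<close> \<open>lead_coeff u \<noteq> 0\<close>
      by (simp add: lead_coeff_comp l_def \<alpha>_def mult.commute)
    show "coeff (h \<circ>\<^sub>p u) 0 = coeff (l \<circ>\<^sub>p h) 0"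
      by (simp add: l_def pcompose_pCons)
  qed
  ultimately show thesis
    using that \<open>degree l = 1\<close> by blast
qed

lemma (in group) card_subgroup_dvd_order: "subgroup H G \<Longrightarrow> card H dvd order G"
  by (metis dvd_triv_right lagrange)

lemma (in group_hom) card_image_mult_card_kernel:
  "card (h ` carrier G) * card (kernel G H h) = order G"
proof -
  let ?I = "H\<lparr>carrier := h ` carrier G\<rparr>"
  have "group ?I"
    by (rule H.subgroup_imp_group[OF img_is_subgroup])
  moreover have "h \<in> hom G ?I"
    by (auto simp: hom_def)
  ultimately have "group_hom G ?I h"
    by (simp add: group_hom_def group_hom_axioms_def G.is_group)
  then have "G Mod kernel G ?I h \<cong> ?I"
    by (rule group_hom.FactGroup_iso) simp
  moreover have "kernel G ?I h = kernel G H h"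
    by (simp add: kernel_def)
  ultimately have "card (carrier (G Mod kernel G H h)) = card (h ` carrier G)"
    using iso_same_card by fastforce
  then show ?thesis
    using G.lagrange[OF subgroup_kernel] by (simp add: FactGroup_def)
qed

definition linear_poly_group :: "'a::field poly monoid" where
  "linear_poly_group = \<lparr>carrier = {q. degree q = 1}, mult = pcompose, one = [:0, 1:]\<rparr>"

lemma linear_poly_group_simps [simp]:
  "carrier linear_poly_group = {q. degree q = 1}"
  "mult linear_poly_group = pcompose"
  "one linear_poly_group = [:0, 1:]"
  by (simp_all add: linear_poly_group_def)

lemma group_linear_poly_group: "group (linear_poly_group :: 'a::field poly monoid)"
proof (rule groupI)
  fix x y z :: "'a poly"
  show "x \<otimes>\<^bsub>linear_poly_group\<^esub> y \<in> carrier linear_poly_group"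
    if "x \<in> carrier linear_poly_group" "y \<in> carrier linear_poly_group"
    using that by (simp add: degree_pcompose)
  show "x \<otimes>\<^bsub>linear_poly_group\<^esub> y \<otimes>\<^bsub>linear_poly_group\<^esub> z
      = x \<otimes>\<^bsub>linear_poly_group\<^esub> (y \<otimes>\<^bsub>linear_poly_group\<^esub> z)"
    by (simp add: pcompose_assoc)
  show "\<exists>y\<in>carrier linear_poly_group. y \<otimes>\<^bsub>linear_poly_group\<^esub> x = \<one>\<^bsub>linear_poly_group\<^esub>"
    if "x \<in> carrier linear_poly_group"
  proof -
    have "degree x = 1"
      using that by simp
    then obtain y where "degree y = 1" "x \<circ>\<^sub>p y = [:0, 1:]" "y \<circ>\<^sub>p x = [:0, 1:]"
      by (rule linear_poly_inverse)
    then show ?thesis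
      by auto
  qed
qed simp_all

definition linear_fixing_group :: "'a::field poly \<Rightarrow> 'a poly set" where
  "linear_fixing_group f = {q. degree q = 1 \<and> f \<circ>\<^sub>p q = f}"

lemma subgroup_linear_fixing_group:
  "subgroup (linear_fixing_group f) (linear_poly_group :: 'a::field poly monoid)"
proof -
  interpret L: group "linear_poly_group :: 'a poly monoid"
    by (rule group_linear_poly_group)
  show ?thesis
  proof (rule L.subgroupI)
    fix q assume q: "q \<in> linear_fixing_group f"
    let ?q' = "inv\<^bsub>linear_poly_group\<^esub> q"
    have "q \<in> carrier linear_poly_group"
      using q by (simp add: linear_fixing_group_def)
    then have "f \<circ>\<^sub>p ?q' = (f \<circ>\<^sub>p q) \<circ>\<^sub>p ?q'" "q \<circ>\<^sub>p ?q' = [:0, 1:]"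
      using q L.r_inv[of q] by (simp_all add: linear_fixing_group_def)
    then show "?q' \<in> linear_fixing_group f"
      using L.inv_closed[OF \<open>q \<in> carrier linear_poly_group\<close>]
      by (simp add: linear_fixing_group_def flip: pcompose_assoc)
  next
    have "[:0, 1:] \<in> linear_fixing_group f"
      by (simp add: linear_fixing_group_def)
    then show "linear_fixing_group f \<noteq> {}"
      by blast
  qed (auto simp: linear_fixing_group_def degree_pcompose pcompose_assoc)
qed

definition intertwiner :: "'a::field poly \<Rightarrow> 'a poly \<Rightarrow> 'a poly" where
  "intertwiner h u = (THE l. h \<circ>\<^sub>p u = l \<circ>\<^sub>p h)"

lemma intertwiner_eqI:
  fixes h u l :: "'a::field poly"
  assumes "degree h \<noteq> 0" "h \<circ>\<^sub>p u = l \<circ>\<^sub>p h"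
  shows "intertwiner h u = l"
  unfolding intertwiner_def
  using assms pcompose_right_cancel[OF assms(1)] by (rule_tac the_equality) auto

lemma intertwiner_in_linear_fixing_group:
  fixes g h u :: "'a::field poly"
  assumes "tame g" "degree h \<noteq> 0" "u \<in> linear_fixing_group (g \<circ>\<^sub>p h)"
  shows "intertwiner h u \<in> linear_fixing_group g" "h \<circ>\<^sub>p u = intertwiner h u \<circ>\<^sub>p h"
proof -
  have "degree u = 1" "g \<circ>\<^sub>p (h \<circ>\<^sub>p u) = g \<circ>\<^sub>p h"
    using assms(3) by (simp_all add: linear_fixing_group_def pcompose_assoc)
  then obtain l where l: "degree l = 1" "h \<circ>\<^sub>p u = l \<circ>\<^sub>p h"
    by (rule linear_intertwiner_exists[OF assms(1,2)])
  then have "(g \<circ>\<^sub>p l) \<circ>\<^sub>p h = g \<circ>\<^sub>p h"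
    using \<open>g \<circ>\<^sub>p (h \<circ>\<^sub>p u) = g \<circ>\<^sub>p h\<close> by (simp add: pcompose_assoc)
  then have "g \<circ>\<^sub>p l = g"
    using pcompose_right_cancel[OF assms(2)] by blast
  moreover have "intertwiner h u = l"
    using intertwiner_eqI[OF assms(2) l(2)] .
  ultimately show "intertwiner h u \<in> linear_fixing_group g" "h \<circ>\<^sub>p u = intertwiner h u \<circ>\<^sub>p h"
    using l by (simp_all add: linear_fixing_group_def)
qed

lemma group_hom_intertwiner:
  fixes g h :: "'a::field poly"
  assumes "tame g" "degree h \<noteq> 0"
  shows "group_hom (linear_poly_group\<lparr>carrier := linear_fixing_group (g \<circ>\<^sub>p h)\<rparr>)
           linear_poly_group (intertwiner h)"
proof -
  interpret L: group "linear_poly_group :: 'a poly monoid"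
    by (rule group_linear_poly_group)
  note in_fix = intertwiner_in_linear_fixing_group[OF assms]
  have "intertwiner h \<in> hom (linear_poly_group\<lparr>carrier := linear_fixing_group (g \<circ>\<^sub>p h)\<rparr>)
      linear_poly_group"
  proof (rule homI)
    fix u v
    assume u: "u \<in> carrier (linear_poly_group\<lparr>carrier := linear_fixing_group (g \<circ>\<^sub>p h)\<rparr>)"
      and v: "v \<in> carrier (linear_poly_group\<lparr>carrier := linear_fixing_group (g \<circ>\<^sub>p h)\<rparr>)"
    show "intertwiner h u \<in> carrier linear_poly_group"
      using in_fix(1) u by (simp add: linear_fixing_group_def)
    have "h \<circ>\<^sub>p (u \<circ>\<^sub>p v) = (intertwiner h u \<circ>\<^sub>p h) \<circ>\<^sub>p v"
      using in_fix(2) u by (simp add: pcompose_assoc)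
    also have "\<dots> = (intertwiner h u \<circ>\<^sub>p intertwiner h v) \<circ>\<^sub>p h"
      using in_fix(2) v by (simp flip: pcompose_assoc)
    finally show "intertwiner h (u \<otimes>\<^bsub>linear_poly_group\<lparr>carrier := linear_fixing_group (g \<circ>\<^sub>p h)\<rparr>\<^esub> v)
        = intertwiner h u \<otimes>\<^bsub>linear_poly_group\<^esub> intertwiner h v"
      by (simp add: intertwiner_eqI[OF assms(2)])
  qed
  then show ?thesis
    using L.subgroup_imp_group[OF subgroup_linear_fixing_group]
    by (simp add: group_hom_def group_hom_axioms_def L.is_group)
qed

lemma card_linear_fixing_group_pcompose_dvd:
  fixes g h :: "'a::field poly"
  assumes "tame g" "degree h \<noteq> 0"
  shows "card (linear_fixing_group (g \<circ>\<^sub>p h))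
           dvd card (linear_fixing_group g) * card (linear_fixing_group h)"
proof -
  let ?G = "linear_poly_group\<lparr>carrier := linear_fixing_group (g \<circ>\<^sub>p h)\<rparr>"
  let ?\<phi> = "intertwiner h"
  interpret L: group "linear_poly_group :: 'a poly monoid"
    by (rule group_linear_poly_group)
  interpret \<phi>: group_hom ?G linear_poly_group ?\<phi>
    using assms by (rule group_hom_intertwiner)
  have "kernel ?G linear_poly_group ?\<phi> = linear_fixing_group h"
  proof -
    have "?\<phi> u = [:0, 1:] \<longleftrightarrow> h \<circ>\<^sub>p u = h" if "u \<in> linear_fixing_group (g \<circ>\<^sub>p h)" for u
    proof
      assume "?\<phi> u = [:0, 1:]"
      then show "h \<circ>\<^sub>p u = h"
        using intertwiner_in_linear_fixing_group(2)[OF assms that] by simp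
    next
      assume "h \<circ>\<^sub>p u = h"
      then show "?\<phi> u = [:0, 1:]"
        by (intro intertwiner_eqI[OF assms(2)]) simp
    qed
    moreover have "linear_fixing_group h \<subseteq> linear_fixing_group (g \<circ>\<^sub>p h)"
      by (auto simp: linear_fixing_group_def simp flip: pcompose_assoc)
    ultimately show ?thesis
      unfolding kernel_def by (auto simp: linear_fixing_group_def)
  qed
  then have "card (linear_fixing_group (g \<circ>\<^sub>p h))
      = card (?\<phi> ` linear_fixing_group (g \<circ>\<^sub>p h)) * card (linear_fixing_group h)"
    using \<phi>.card_image_mult_card_kernel by (simp add: order_def)
  moreover have "card (?\<phi> ` linear_fixing_group (g \<circ>\<^sub>p h)) dvd card (linear_fixing_group g)"
  proof -
    have "?\<phi> ` linear_fixing_group (g \<circ>\<^sub>p h) \<subseteq> linear_fixing_group g"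
      using intertwiner_in_linear_fixing_group(1)[OF assms] by blast
    moreover have "subgroup (?\<phi> ` linear_fixing_group (g \<circ>\<^sub>p h)) linear_poly_group"
      using \<phi>.img_is_subgroup by simp
    ultimately have "subgroup (?\<phi> ` linear_fixing_group (g \<circ>\<^sub>p h))
        (linear_poly_group\<lparr>carrier := linear_fixing_group g\<rparr>)"
      using L.subgroup_incl subgroup_linear_fixing_group by blast
    then show ?thesis
      using group.card_subgroup_dvd_order[OF L.subgroup_imp_group[OF subgroup_linear_fixing_group]]
      by (simp add: order_def)
  qed
  ultimately show ?thesis
    by (simp add: mult_dvd_mono)
qed

lemma tame_foldr_pcompose:
  fixes ps :: "'a::field poly list"
  assumes "\<forall>p\<in>set ps. tame p"
  shows "tame (foldr pcompose ps [:0, 1:])"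
  using assms
proof (induction ps)
  case Nil
  show ?case
    by (simp add: tame_iff_of_nat_degree)
qed (simp add: tame_pcompose)

lemma card_linear_fixing_group_foldr_dvd:
  fixes ps :: "'a::field poly list"
  assumes "\<forall>p\<in>set ps. tame p"
  shows "card (linear_fixing_group (foldr pcompose ps [:0, 1:]))
           dvd (\<Prod>p\<leftarrow>ps. card (linear_fixing_group p))"
  using assms
proof (induction ps)
  case Nil
  have "linear_fixing_group [:0, 1:] = {[:0, 1 :: 'a:]}"
    by (auto simp: linear_fixing_group_def)
  then show ?case
    by simp
next
  case (Cons p ps)
  then have "degree (foldr pcompose ps [:0, 1:]) \<noteq> 0"
    by (simp add: tame_degree_pos tame_foldr_pcompose)
  then have "card (linear_fixing_group (foldr pcompose (p # ps) [:0, 1:]))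
      dvd card (linear_fixing_group p) * card (linear_fixing_group (foldr pcompose ps [:0, 1:]))"
    using Cons.prems by (simp add: card_linear_fixing_group_pcompose_dvd)
  also have "\<dots> dvd (\<Prod>q\<leftarrow>p # ps. card (linear_fixing_group q))"
    using Cons by (simp add: mult_dvd_mono)
  finally show ?case .
qed

lemma poly_comp_ratfun_Fract_1:
  "poly_comp_ratfun f (Fract q 1) = Fract (f \<circ>\<^sub>p q) 1"
  for f q :: "'a::field poly"
proof (induction f)
  case (pCons a f)
  have "map_poly (\<lambda>c. Fract [:c:] 1) (pCons a f)
      = pCons (Fract [:a:] 1) (map_poly (\<lambda>c. Fract [:c:] 1) f)"
    by (rule map_poly_pCons) (simp add: Zero_fract_def)
  with pCons show ?case
    by (simp add: poly_comp_ratfun_def pcompose_pCons)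
qed (simp add: poly_comp_ratfun_def Zero_fract_def)

lemma power_Fract: "Fract a b ^ n = Fract (a ^ n) (b ^ n)"
  for a b :: "'a::idom"
  by (induction n) (simp_all add: One_fract_def)

lemma sum_Fract:
  fixes x :: "'b \<Rightarrow> 'a::idom"
  assumes "D \<noteq> 0"
  shows "(\<Sum>i\<in>A. Fract (x i) D) = Fract (\<Sum>i\<in>A. x i) D"
  using assms by (induction A rule: infinite_finite_induct)
    (simp_all add: Zero_fract_def eq_fract algebra_simps)

lemma poly_comp_ratfun_Fract:
  fixes f P Q :: "'a::field poly"
  assumes "Q \<noteq> 0"
  shows "poly_comp_ratfun f (Fract P Q)
       = Fract (\<Sum>i\<le>degree f. smult (coeff f i) (P ^ i * Q ^ (degree f - i))) (Q ^ degree f)"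
proof -
  define n where "n = degree f"
  define F where "F = map_poly (\<lambda>c. Fract [:c:] 1) f"
  have "degree F = n"
    unfolding F_def n_def by (rule degree_map_poly) (simp add: Zero_fract_def eq_fract)
  have coeff_F: "coeff F i = Fract [:coeff f i:] 1" for i
    unfolding F_def by (rule coeff_map_poly) (simp add: Zero_fract_def)
  have "poly_comp_ratfun f (Fract P Q) = (\<Sum>i\<le>n. coeff F i * Fract P Q ^ i)"
    by (simp add: poly_comp_ratfun_def F_def[symmetric] poly_altdef \<open>degree F = n\<close>)
  also have "\<dots> = (\<Sum>i\<le>n. Fract (smult (coeff f i) (P ^ i * Q ^ (n - i))) (Q ^ n))"
  proof (rule sum.cong[OF refl])
    fix i assume "i \<in> {..n}"
    then have "Q ^ n = Q ^ i * Q ^ (n - i)"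
      by (simp flip: power_add)
    then show "coeff F i * Fract P Q ^ i = Fract (smult (coeff f i) (P ^ i * Q ^ (n - i))) (Q ^ n)"
      using assms by (simp add: coeff_F power_Fract eq_fract algebra_simps)
  qed
  also have "\<dots> = Fract (\<Sum>i\<le>n. smult (coeff f i) (P ^ i * Q ^ (n - i))) (Q ^ n)"
    using assms by (simp add: sum_Fract)
  finally show ?thesis
    by (simp add: n_def)
qed

lemma mobius_fixing_imp_affine:
  fixes f :: "'a::field poly"
  assumes "degree f \<noteq> 0" "a * d - b * c \<noteq> 0"
    and fixed: "poly_comp_ratfun f (mobius a b c d) = Fract f 1"
  shows "c = 0"
proof (rule ccontr)
  assume "c \<noteq> 0"
  define P Q n where "P = [:b, a:]" and "Q = [:d, c:]" and "n = degree f"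
  define H where "H = (\<Sum>i\<le>n. smult (coeff f i) (P ^ i * Q ^ (n - i)))"
  have "Q \<noteq> 0"
    using \<open>c \<noteq> 0\<close> by (simp add: Q_def)
  then have "Fract H (Q ^ n) = Fract f 1"
    using fixed poly_comp_ratfun_Fract[of Q f P] by (simp add: H_def n_def P_def Q_def mobius_def)
  then have "H = f * Q ^ n"
    using \<open>Q \<noteq> 0\<close> by (simp add: eq_fract)
  define x0 where "x0 = - d / c"
  have "poly Q x0 = 0"
    using \<open>c \<noteq> 0\<close> by (simp add: Q_def x0_def)
  have "poly P x0 \<noteq> 0"
  proof
    assume "poly P x0 = 0"
    then have "b * c - a * d = 0"
      using \<open>c \<noteq> 0\<close> by (simp add: P_def x0_def field_simps)
    with assms(2) show False
      by (simp add: algebra_simps)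
  qed
  have "poly H x0 = (\<Sum>i\<le>n. coeff f i * (poly P x0 ^ i * poly Q x0 ^ (n - i)))"
    by (simp add: H_def poly_sum)
  also have "\<dots> = (\<Sum>i\<le>n. if i = n then coeff f n * poly P x0 ^ n else 0)"
    using \<open>poly Q x0 = 0\<close> by (intro sum.cong) auto
  also have "\<dots> = coeff f n * poly P x0 ^ n"
    by simp
  finally have "poly H x0 = coeff f n * poly P x0 ^ n" .
  moreover have "poly H x0 = 0"
    using \<open>H = f * Q ^ n\<close> \<open>poly Q x0 = 0\<close> assms(1) by (simp add: n_def)
  ultimately show False
    using \<open>poly P x0 \<noteq> 0\<close> assms(1) by (simp add: n_def)
qed

lemma fixing_group_eq_linear_fixing_group:
  fixes f :: "'a::field poly"
  assumes "degree f \<noteq> 0"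
  shows "fixing_group f = (\<lambda>q. Fract q 1) ` linear_fixing_group f"
proof (intro equalityI subsetI)
  fix u assume "u \<in> fixing_group f"
  then obtain a b c d where det: "a * d - b * c \<noteq> 0" and u: "u = mobius a b c d"
    and fixed: "poly_comp_ratfun f u = Fract f 1"
    by (auto simp: fixing_group_def)
  have "c = 0"
    using mobius_fixing_imp_affine[OF assms det] fixed u by simp
  with det have "a \<noteq> 0" "d \<noteq> 0"
    by auto
  define q where "q = [:b / d, a / d:]"
  have "u = Fract q 1"
    using u \<open>c = 0\<close> \<open>a \<noteq> 0\<close> \<open>d \<noteq> 0\<close> by (simp add: mobius_def q_def eq_fract)
  moreover have "degree q = 1"
    using \<open>a \<noteq> 0\<close> \<open>d \<noteq> 0\<close> by (simp add: q_def)
  moreover have "f \<circ>\<^sub>p q = f"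
    using fixed \<open>u = Fract q 1\<close> by (simp add: poly_comp_ratfun_Fract_1 eq_fract)
  ultimately show "u \<in> (\<lambda>q. Fract q 1) ` linear_fixing_group f"
    by (auto simp: linear_fixing_group_def)
next
  fix u assume "u \<in> (\<lambda>q. Fract q 1) ` linear_fixing_group f"
  then obtain q where q: "degree q = 1" "f \<circ>\<^sub>p q = f" and u: "u = Fract q 1"
    by (auto simp: linear_fixing_group_def)
  obtain a b where "q = [:b, a:]" "a \<noteq> 0"
    using degree1_coeffs[OF q(1)] .
  then have "u = mobius a b 0 1"
    using u by (simp add: mobius_def one_pCons)
  moreover have "poly_comp_ratfun f u = Fract f 1"
    using u q(2) by (simp add: poly_comp_ratfun_Fract_1)
  ultimately show "u \<in> fixing_group f"
    using \<open>a \<noteq> 0\<close> unfolding fixing_group_def by force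
qed

lemma card_fixing_group:
  fixes f :: "'a::field poly"
  assumes "degree f \<noteq> 0"
  shows "card (fixing_group f) = card (linear_fixing_group f)"
proof -
  have "inj (\<lambda>q :: 'a poly. Fract q 1)"
    by (rule injI) (simp add: eq_fract)
  then show ?thesis
    by (simp add: fixing_group_eq_linear_fixing_group[OF assms] card_image inj_on_subset)
qed

theorem mainTheorem2:
  fixes ps :: "'a::field poly list"
  assumes "\<forall>p\<in>set ps. tame p"
  shows "card (fixing_group (foldr pcompose ps [:0, 1:]))
           dvd (\<Prod>p\<leftarrow>ps. card (fixing_group p))"
proof -
  have "card (fixing_group (foldr pcompose ps [:0, 1:]))
      = card (linear_fixing_group (foldr pcompose ps [:0, 1:]))"
    using assms by (simp add: card_fixing_group tame_degree_pos tame_foldr_pcompose)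
  moreover have "(\<Prod>p\<leftarrow>ps. card (fixing_group p)) = (\<Prod>p\<leftarrow>ps. card (linear_fixing_group p))"
    using assms by (simp add: card_fixing_group tame_degree_pos cong: map_cong)
  ultimately show ?thesis
    using card_linear_fixing_group_foldr_dvd[OF assms] by simp
qed

end
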